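(* Let $r\ge1$ and let $G_r(t,u,v,z)=\sum_w t^{\mathrm{length}(w)}u^{\mathrm{asc}(w)}v^{\mathrm{last}(w)}z^{\mathrm{zeros}(w)}$, summed over all ascent sequences $w=(x_1,\dots,x_n)$ with $n\ge r+1$, $x_1=\dots=x_r=0$ and $x_{r+1}=1$. Then $$(v-1-tv(1-u))\,G_r(t,u,v,z)=(v-1)t^{r+1}uvz^r+t((v-1)z-v)\,G_r(t,u,1,z)+tuv^2\,G_r(t,uv,1,z).$$
   Context: An ascent sequence of length $n$ is a sequence $(x_1,\dots,x_n)$ of nonnegative integers with $x_1=0$ and $x_i\in[0,1+\mathrm{asc}(x_1,\dots,x_{i-1})]$ for $2\le i\le n$, where $\mathrm{asc}(y_1,\dots,y_k)=|\{1\le j<k: y_j<y_{j+1}\}|$. For an ascent sequence $w$: $\mathrm{length}(w)$ is its number of entries, $\mathrm{asc}(w)$ its number of ascents, $\mathrm{last}(w)$ its rightmost entry, $\mathrm{zeros}(w)$ its number of entries equal to 0. $G_r$ is a formal power series in $t$ with polynomial coefficients in $u,v,z$; $G_r(t,u,1,z)$ and $G_r(t,uv,1,z)$ denote the substitutions $v\mapsto1$ and $(u,v)\mapsto(uv,1)$ respectively. *)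

theory Defs
  imports "HOL-Computational_Algebra.Formal_Power_Series"
begin

definition asc :: "nat list \<Rightarrow> nat" where
  "asc ys = card {j. j + 1 < length ys \<and> ys ! j < ys ! (j + 1)}"

definition ascent_seq :: "nat list \<Rightarrow> bool" where
  "ascent_seq xs \<longleftrightarrow> xs \<noteq> [] \<and> xs ! 0 = 0 \<and>
     (\<forall>i. 1 \<le> i \<and> i < length xs \<longrightarrow> xs ! i \<le> 1 + asc (take i xs))"

definition zeros :: "nat list \<Rightarrow> nat" where
  "zeros xs = length (filter (\<lambda>x. x = 0) xs)"

definition AS_r :: "nat \<Rightarrow> nat \<Rightarrow> nat list set" where
  "AS_r r n = {w. ascent_seq w \<and> length w = n \<and> r + 1 \<le> n \<and>
                  (\<forall>i<r. w ! i = 0) \<and> w ! r = 1}"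

text \<open>G_r(t,u,v,z) as a formal power series in t, with coefficients evaluated at
  u, v, z in an arbitrary commutative ring (e.g. a polynomial ring).\<close>
definition G :: "nat \<Rightarrow> 'a::comm_ring_1 \<Rightarrow> 'a \<Rightarrow> 'a \<Rightarrow> 'a fps" where
  "G r u v z = Abs_fps (\<lambda>n. \<Sum>w\<in>AS_r r n. u ^ asc w * v ^ last w * z ^ zeros w)"

end

theory Submission
  imports Defs
begin

text \<open>Every sequence counted by the coefficient of \<open>t\<^sup>m\<^sup>+\<^sup>1\<close> of \<open>G\<^sub>r\<close>, \<open>m > r\<close>, arises in
  exactly one way by appending an entry \<open>x \<in> [0, 1 + asc w]\<close> to a sequence \<open>w\<close> counted by
  the coefficient of \<open>t\<^sup>m\<close>. Appending \<open>x\<close> replaces \<open>v\<^bsup>last w\<^esup>\<close> by \<open>v\<^sup>x\<close> and contributes a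
  factor \<open>u\<close> if \<open>x > last w\<close> and a factor \<open>z\<close> if \<open>x = 0\<close>. Multiplied by \<open>v - 1\<close>, the sum over
  \<open>x\<close> telescopes into \<open>(v - 1) z - v + v\<^bsup>last w+1\<^esup> + u (v\<^bsup>asc w+2\<^esup> - v\<^bsup>last w+1\<^esup>)\<close>, using
  \<open>last w \<le> 1 + asc w\<close>. Comparing coefficients yields the functional equation; the term
  \<open>t\<^sup>r\<^sup>+\<^sup>1\<close> accounts for the single shortest sequence \<open>0\<^sup>r1\<close>.\<close>

lemma asc_snoc:
  assumes "w \<noteq> []"
  shows "asc (w @ [x]) = asc w + (if last w < x then 1 else 0)"
proof -
  let ?S = "{j. j + 1 < length w \<and> w ! j < w ! (j + 1)}"
  have "{j. j + 1 < length (w @ [x]) \<and> (w @ [x]) ! j < (w @ [x]) ! (j + 1)}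
      = ?S \<union> (if last w < x then {length w - 1} else {})"
  proof (rule set_eqI)
    fix j
    consider "j + 1 < length w" | "j + 1 = length w" | "j + 1 > length w" by linarith
    then show "j \<in> {j. j + 1 < length (w @ [x]) \<and> (w @ [x]) ! j < (w @ [x]) ! (j + 1)}
      \<longleftrightarrow> j \<in> ?S \<union> (if last w < x then {length w - 1} else {})"
      by cases (use assms in \<open>auto simp: nth_append last_conv_nth dest: sym[of "Suc j"]\<close>)
  qed
  moreover have "finite ?S" by (rule finite_subset[of _ "{..<length w}"]) auto
  ultimately show ?thesis using assms by (simp add: asc_def card_insert_if)
qed

lemma zeros_snoc: "zeros (w @ [x]) = zeros w + (if x = 0 then 1 else 0)"
  by (simp add: zeros_def)

lemma asc_le_length: "asc ys \<le> length ys"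
proof -
  have "{j. j + 1 < length ys \<and> ys ! j < ys ! (j + 1)} \<subseteq> {..<length ys}" by auto
  then show ?thesis unfolding asc_def by (metis card_lessThan card_mono finite_lessThan)
qed

lemma ascent_seq_snoc:
  assumes "w \<noteq> []"
  shows "ascent_seq (w @ [x]) \<longleftrightarrow> ascent_seq w \<and> x \<le> 1 + asc w"
proof -
  have "(\<forall>i. 1 \<le> i \<and> i < length (w @ [x]) \<longrightarrow> (w @ [x]) ! i \<le> 1 + asc (take i (w @ [x])))
    \<longleftrightarrow> (\<forall>i. 1 \<le> i \<and> i < length w \<longrightarrow> w ! i \<le> 1 + asc (take i w)) \<and> x \<le> 1 + asc w"
    using assms by (auto simp: nth_append less_Suc_eq Suc_le_eq)
  then show ?thesis using assms by (simp add: ascent_seq_def nth_append)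
qed

lemma ascent_seq_last_le:
  assumes "ascent_seq w" "length w \<ge> 2"
  shows "last w \<le> 1 + asc w"
proof -
  have ne: "butlast w \<noteq> []" using assms(2) by (cases w rule: rev_cases) auto
  have w: "w = butlast w @ [last w]" using assms(2) by (cases w rule: rev_cases) auto
  have "ascent_seq (butlast w @ [last w])" using assms(1) w by simp
  then have "last w \<le> 1 + asc (butlast w)" using ascent_seq_snoc[OF ne] by blast
  moreover have "asc (butlast w) \<le> asc w" using asc_snoc[OF ne, of "last w"] w by simp
  ultimately show ?thesis by simp
qed

lemma ascent_seq_nth_le_length:
  assumes "ascent_seq w" "i < length w"
  shows "w ! i \<le> length w"
proof (cases "i = 0")
  case True
  then show ?thesis using assms by (simp add: ascent_seq_def)
next
  case False
  then have "w ! i \<le> 1 + asc (take i w)" using assms by (simp add: ascent_seq_def)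
  also have "\<dots> \<le> length w" using asc_le_length[of "take i w"] assms(2) by simp
  finally show ?thesis .
qed

lemma finite_ascent_seqs_length: "finite {w. ascent_seq w \<and> length w = n}"
proof (rule finite_subset)
  show "{w. ascent_seq w \<and> length w = n} \<subseteq> {w. set w \<subseteq> {..n} \<and> length w = n}"
    by (auto simp: in_set_conv_nth dest: ascent_seq_nth_le_length)
qed (simp add: finite_lists_length_eq)

lemma AS_r_eq_empty: "n < r + 1 \<Longrightarrow> AS_r r n = {}"
  by (auto simp: AS_r_def)

lemma finite_AS_r: "finite (AS_r r n)"
  by (rule finite_subset[OF _ finite_ascent_seqs_length[of n]]) (auto simp: AS_r_def)

lemma AS_r_initial:
  assumes "r \<ge> 1"
  shows "AS_r r (r + 1) = {replicate r 0 @ [1]}"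
proof
  show "AS_r r (r + 1) \<subseteq> {replicate r 0 @ [1]}"
    by (auto simp: AS_r_def nth_append less_Suc_eq intro!: nth_equalityI)
  have "ascent_seq (replicate r (0::nat))" using assms by (auto simp: ascent_seq_def)
  then have "ascent_seq (replicate r 0 @ [1])" using assms by (simp add: ascent_seq_snoc)
  then show "{replicate r 0 @ [1]} \<subseteq> AS_r r (r + 1)" by (auto simp: AS_r_def nth_append)
qed

lemma AS_r_Suc:
  assumes "m \<ge> r + 1"
  shows "AS_r r (Suc m) = (\<lambda>(w, x). w @ [x]) ` (SIGMA w:AS_r r m. {0..1 + asc w})"
proof
  show "AS_r r (Suc m) \<subseteq> (\<lambda>(w, x). w @ [x]) ` (SIGMA w:AS_r r m. {0..1 + asc w})"
  proof
    fix w' assume w': "w' \<in> AS_r r (Suc m)"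
    then obtain w x where split: "w' = w @ [x]" and len: "length w = m"
      by (cases w' rule: rev_cases) (auto simp: AS_r_def)
    then have "w \<noteq> []" using assms by auto
    with w' split len assms have "w \<in> AS_r r m" "x \<le> 1 + asc w"
      by (auto simp: AS_r_def nth_append ascent_seq_snoc)
    with split show "w' \<in> (\<lambda>(w, x). w @ [x]) ` (SIGMA w:AS_r r m. {0..1 + asc w})" by force
  qed
  show "(\<lambda>(w, x). w @ [x]) ` (SIGMA w:AS_r r m. {0..1 + asc w}) \<subseteq> AS_r r (Suc m)"
  proof clarify
    fix w x assume w: "w \<in> AS_r r m" and x: "x \<in> {0..1 + asc w}"
    then have "w \<noteq> []" using assms by (auto simp: AS_r_def)
    with w x assms show "w @ [x] \<in> AS_r r (Suc m)"
      by (auto simp: AS_r_def nth_append ascent_seq_snoc)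
  qed
qed

lemma sum_append_factor:
  fixes u v z :: "'a::comm_ring_1"
  shows "(v - 1) * (\<Sum>x=0..c. (if l < x then u else 1) * v ^ x * (if x = 0 then z else 1))
    = (v - 1) * z - v + v ^ (min c l + 1) + u * (v ^ (c + 1) - v ^ (min c l + 1))"
proof (induction c)
  case (Suc c)
  show ?case
  proof (cases "Suc c \<le> l")
    case True
    then have "min (Suc c) l = Suc c" "min c l = c" by auto
    with Suc.IH True show ?thesis unfolding sum.atLeast0_atMost_Suc by (simp add: algebra_simps)
  next
    case False
    then have "min (Suc c) l = l" "min c l = l" by auto
    with Suc.IH False show ?thesis unfolding sum.atLeast0_atMost_Suc by (simp add: algebra_simps)
  qed
qed (simp add: algebra_simps)

definition seq_weight :: "'a::comm_ring_1 \<Rightarrow> 'a \<Rightarrow> 'a \<Rightarrow> nat list \<Rightarrow> 'a" where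
  "seq_weight u v z w = u ^ asc w * v ^ last w * z ^ zeros w"

lemma fps_nth_G: "fps_nth (G r u v z) n = (\<Sum>w\<in>AS_r r n. seq_weight u v z w)"
  by (simp add: G_def seq_weight_def)

lemma seq_weight_snoc:
  assumes "w \<noteq> []"
  shows "seq_weight u v z (w @ [x])
    = seq_weight u 1 z w * ((if last w < x then u else 1) * v ^ x * (if x = 0 then z else 1))"
  using assms by (simp add: seq_weight_def asc_snoc zeros_snoc power_add)

lemma seq_weight_extension_sum:
  fixes u v z :: "'a::comm_ring_1"
  assumes "w \<noteq> []" "last w \<le> 1 + asc w"
  shows "(v - 1) * (\<Sum>x=0..1 + asc w. seq_weight u v z (w @ [x])) - v * (1 - u) * seq_weight u v z w
    = ((v - 1) * z - v) * seq_weight u 1 z w + u * v ^ 2 * seq_weight (u * v) 1 z w"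
proof -
  let ?ext = "\<lambda>x. (if last w < x then u else 1) * v ^ x * (if x = 0 then z else 1)"
  have "(\<Sum>x=0..1 + asc w. seq_weight u v z (w @ [x])) = seq_weight u 1 z w * (\<Sum>x=0..1 + asc w. ?ext x)"
    by (simp only: seq_weight_snoc[OF assms(1)] sum_distrib_left)
  then have "(v - 1) * (\<Sum>x=0..1 + asc w. seq_weight u v z (w @ [x]))
      = seq_weight u 1 z w * ((v - 1) * (\<Sum>x=0..1 + asc w. ?ext x))"
    by (simp only: mult.left_commute)
  also have "\<dots> = seq_weight u 1 z w
      * ((v - 1) * z - v + v ^ (last w + 1) + u * (v ^ (1 + asc w + 1) - v ^ (last w + 1)))"
    by (simp only: sum_append_factor min_absorb2[OF assms(2)])
  finally show ?thesis
    by (simp add: seq_weight_def power_mult_distrib algebra_simps power2_eq_square)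
qed

lemma G_nth_less: "n < r + 1 \<Longrightarrow> fps_nth (G r u v z) n = 0"
  by (simp add: fps_nth_G AS_r_eq_empty)

lemma G_nth_initial:
  assumes "r \<ge> 1"
  shows "fps_nth (G r u v z) (Suc r) = u * v * z ^ r"
proof -
  have "asc (replicate r (0::nat)) = 0" by (simp add: asc_def cong: conj_cong)
  then have "asc (replicate r 0 @ [1::nat]) = 1" using assms by (simp add: asc_snoc)
  then show ?thesis
    using AS_r_initial[OF assms] by (simp add: fps_nth_G seq_weight_def zeros_def)
qed

lemma G_nth_Suc:
  assumes "m \<ge> r + 1"
  shows "fps_nth (G r u v z) (Suc m) = (\<Sum>w\<in>AS_r r m. \<Sum>x=0..1 + asc w. seq_weight u v z (w @ [x]))"
proof -
  have inj: "inj_on (\<lambda>(w, x). w @ [x]) (SIGMA w:AS_r r m. {0..1 + asc w})"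
    by (auto simp: inj_on_def)
  have "(\<Sum>w\<in>AS_r r m. \<Sum>x=0..1 + asc w. seq_weight u v z (w @ [x]))
      = (\<Sum>(w, x)\<in>(SIGMA w:AS_r r m. {0..1 + asc w}). seq_weight u v z (w @ [x]))"
    by (rule sum.Sigma) (simp_all add: finite_AS_r)
  also have "\<dots> = fps_nth (G r u v z) (Suc m)"
    unfolding fps_nth_G AS_r_Suc[OF assms] sum.reindex[OF inj] by (simp add: case_prod_beta)
  finally show ?thesis ..
qed

lemma G_coeff_recurrence:
  fixes u v z :: "'a::comm_ring_1"
  assumes "r \<ge> 1"
  shows "(v - 1) * fps_nth (G r u v z) (Suc m) - v * (1 - u) * fps_nth (G r u v z) m
    = (if m = r then (v - 1) * u * v * z ^ r else 0)
      + ((v - 1) * z - v) * fps_nth (G r u 1 z) m + u * v ^ 2 * fps_nth (G r (u * v) 1 z) m"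
proof -
  consider "m < r" | "m = r" | "m \<ge> r + 1" by linarith
  then show ?thesis
  proof cases
    case 1
    then show ?thesis by (simp add: G_nth_less)
  next
    case 2
    then show ?thesis by (simp add: G_nth_initial[OF assms] G_nth_less algebra_simps)
  next
    case 3
    have "w \<noteq> [] \<and> last w \<le> 1 + asc w" if "w \<in> AS_r r m" for w
      using that 3 assms ascent_seq_last_le[of w] by (auto simp: AS_r_def)
    then have per_prefix: "(v - 1) * (\<Sum>x=0..1 + asc w. seq_weight u v z (w @ [x]))
        - v * (1 - u) * seq_weight u v z w
      = ((v - 1) * z - v) * seq_weight u 1 z w + u * v ^ 2 * seq_weight (u * v) 1 z w"
      if "w \<in> AS_r r m" for w
      using that seq_weight_extension_sum by blast
    have "(v - 1) * fps_nth (G r u v z) (Suc m) - v * (1 - u) * fps_nth (G r u v z) m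
        = (\<Sum>w\<in>AS_r r m. (v - 1) * (\<Sum>x=0..1 + asc w. seq_weight u v z (w @ [x]))
            - v * (1 - u) * seq_weight u v z w)"
      unfolding G_nth_Suc[OF 3] unfolding fps_nth_G sum_subtractf sum_distrib_left ..
    also have "\<dots> = (\<Sum>w\<in>AS_r r m.
        ((v - 1) * z - v) * seq_weight u 1 z w + u * v ^ 2 * seq_weight (u * v) 1 z w)"
      using per_prefix by (rule sum.cong[OF refl])
    finally show ?thesis using 3 by (simp add: fps_nth_G sum.distrib sum_distrib_left)
  qed
qed

theorem lemma2:
  fixes u v z :: "'a::comm_ring_1" and r :: nat
  assumes "r \<ge> 1"
  shows "(fps_const (v - 1) - fps_X * fps_const (v * (1 - u))) * G r u v z
         = fps_const ((v - 1) * u * v * z ^ r) * fps_X ^ (r + 1)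
           + fps_X * fps_const ((v - 1) * z - v) * G r u 1 z
           + fps_X * fps_const (u * v ^ 2) * G r (u * v) 1 z"
proof (rule fps_ext, goal_cases)
  case (1 n)
  show ?case
  proof (cases n)
    case 0
    then show ?thesis using assms by (simp add: algebra_simps G_nth_less)
  next
    case (Suc m)
    then show ?thesis
      using G_coeff_recurrence[OF assms, of v u z m] by (cases "m = r") (simp_all add: algebra_simps)
  qed
qed

end
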